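(* Consider the averaged buck converter $-L\dot I=V-uV_s$, $C\dot V=I-GV$ with scalar constants $L>0$, $C>0$, $G\ge0$, $V_s\in\mathbb{R}$, extended by $\dot u=\upsilon$ (state $(I,V,\dot I,\dot V,u)$, input $\upsilon$). Then this system is passive with respect to the storage function $S=\tfrac12L\dot I^2+\tfrac12C\dot V^2$ and the port-variables $\dot u$ and $\dot IV_s$, i.e. $\dot S\le\dot u\,\dot IV_s$.
   Context: $I$ is the inductor current, $V$ the capacitor voltage, $u\in[0,1]$ the duty cycle (averaged model). *)

theory Defs
  imports "HOL-Analysis.Analysis"
begin

end

theory Submission
  imports Defs
begin

text \<open>Differentiating the circuit equations turns the storage function S into the ordinary
  electrical energy of the incremental circuit. Along solutions the cross terms
  \<open>\<plusminus> \<dot>I \<dot>V\<close> of inductor and capacitor cancel, so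
  \<open>\<dot>S = \<dot>u \<dot>I V\<^sub>s - G \<dot>V\<^sup>2\<close>, and the resistive term is nonpositive.\<close>

lemma has_real_derivative_of_scaled_eq:
  fixes c :: real
  assumes "c \<noteq> 0"
    and "\<And>s. c * f s = g s"
    and "(g has_real_derivative g') (at t)"
  shows "(f has_real_derivative g' / c) (at t)"
proof -
  have "f = (\<lambda>s. g s / c)"
    using assms(1,2) by (intro ext) (metis nonzero_mult_div_cancel_left)
  then show ?thesis
    using assms(1,3) by (auto intro!: derivative_eq_intros)
qed

lemma buck_storage_has_derivative:
  fixes L C G Vs :: real
    and I V u dI dV \<upsilon> :: "real \<Rightarrow> real"
  assumes "L \<noteq> 0" and "C \<noteq> 0"
    and I_deriv: "\<And>t. (I has_real_derivative dI t) (at t)"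
    and V_deriv: "\<And>t. (V has_real_derivative dV t) (at t)"
    and u_deriv: "\<And>t. (u has_real_derivative \<upsilon> t) (at t)"
    and eqI: "\<And>t. - L * dI t = V t - u t * Vs"
    and eqV: "\<And>t. C * dV t = I t - G * V t"
  shows "((\<lambda>s. L * (dI s)\<^sup>2 / 2 + C * (dV s)\<^sup>2 / 2) has_real_derivative
           \<upsilon> t * (dI t * Vs) - G * (dV t)\<^sup>2) (at t)"
proof -
  have dI_deriv: "(dI has_real_derivative (dV t - \<upsilon> t * Vs) / - L) (at t)"
    using \<open>L \<noteq> 0\<close> eqI
    by (intro has_real_derivative_of_scaled_eq) (auto intro!: derivative_eq_intros V_deriv u_deriv)
  have dV_deriv: "(dV has_real_derivative (dI t - G * dV t) / C) (at t)"
    using \<open>C \<noteq> 0\<close> eqV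
    by (intro has_real_derivative_of_scaled_eq) (auto intro!: derivative_eq_intros I_deriv V_deriv)
  show ?thesis
    using \<open>L \<noteq> 0\<close> \<open>C \<noteq> 0\<close>
    by (auto intro!: derivative_eq_intros dI_deriv dV_deriv simp: field_simps power2_eq_square)
qed

theorem lemma2:
  fixes L C G Vs :: real
    and I V u dI dV \<upsilon> :: "real \<Rightarrow> real"
  assumes "L > 0" and "C > 0" and "G \<ge> 0"
    and I_deriv: "\<And>t. (I has_real_derivative dI t) (at t)"
    and V_deriv: "\<And>t. (V has_real_derivative dV t) (at t)"
    and u_deriv: "\<And>t. (u has_real_derivative \<upsilon> t) (at t)"
    and dI_diff: "\<And>t. dI differentiable (at t)"
    and dV_diff: "\<And>t. dV differentiable (at t)"
    and eqI: "\<And>t. - L * dI t = V t - u t * Vs"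
    and eqV: "\<And>t. C * dV t = I t - G * V t"
  shows "(\<forall>t. (\<lambda>s. L * (dI s)\<^sup>2 / 2 + C * (dV s)\<^sup>2 / 2) differentiable (at t))
       \<and> (\<forall>t. deriv (\<lambda>s. L * (dI s)\<^sup>2 / 2 + C * (dV s)\<^sup>2 / 2) t
                \<le> \<upsilon> t * (dI t * Vs))"
proof (intro conjI allI)
  fix t
  have S_deriv: "((\<lambda>s. L * (dI s)\<^sup>2 / 2 + C * (dV s)\<^sup>2 / 2) has_real_derivative
                   \<upsilon> t * (dI t * Vs) - G * (dV t)\<^sup>2) (at t)"
    using \<open>L > 0\<close> \<open>C > 0\<close> I_deriv V_deriv u_deriv eqI eqV
    by (intro buck_storage_has_derivative) auto
  then show "(\<lambda>s. L * (dI s)\<^sup>2 / 2 + C * (dV s)\<^sup>2 / 2) differentiable (at t)"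
    using real_differentiable_def by blast
  have "deriv (\<lambda>s. L * (dI s)\<^sup>2 / 2 + C * (dV s)\<^sup>2 / 2) t = \<upsilon> t * (dI t * Vs) - G * (dV t)\<^sup>2"
    using S_deriv by (rule DERIV_imp_deriv)
  also have "\<dots> \<le> \<upsilon> t * (dI t * Vs)"
    using \<open>G \<ge> 0\<close> by simp
  finally show "deriv (\<lambda>s. L * (dI s)\<^sup>2 / 2 + C * (dV s)\<^sup>2 / 2) t \<le> \<upsilon> t * (dI t * Vs)" .
qed

end
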